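(* Let $a\in\mathbb N$, $N\in\mathbb N$, and let $(n_p)_{1\le p\le N}$ and $(k_p)_{1\le p\le N}$ be strictly increasing sequences in $\mathbb N$ such that, with $n_0:=0$, $k_0:=0$, $n_{N+1}:=n_N+1$, $k_{N+1}:=k_N$, $$\frac{k_p-k_{p-1}}{n_p-n_{p-1}}-\frac{k_{p+1}-k_p}{n_{p+1}-n_p}>0\qquad\forall\,1\le p\le N.$$ Define $\gamma=(\gamma_n)_{n\ge1}$ by $\gamma_n:=0$ for $n\notin\{n_1,\dots,n_N\}$ and $$\gamma_{n_p}:=\frac1a\Big(\frac{k_p-k_{p-1}}{n_p-n_{p-1}}-\frac{k_{p+1}-k_p}{n_{p+1}-n_p}\Big),\qquad 1\le p\le N.$$ Then for all $1\le p\le N$, $\check\omega_{n_p}(\gamma)=k_p/a$ and $\omega_{n_p}(\gamma)=n_p^2-2\check\omega_{n_p}(\gamma)\in\frac1a\mathbb Z$. Consequently every $u_0\in\mathrm{Iso}_\gamma:=\{u\in L^2_{r,0}:\gamma_n(u)=\gamma_n\ \forall n\ge1\}$ is a finite gap potential, the solution $t\mapsto\mathcal S(t)u_0$ of the BO equation is periodic in time with period $T=2\pi a$, and $\mathrm{Iso}_\gamma$ is entirely filled with $T$-periodic solutions.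
   Context: For real $\gamma=(\gamma_n)_{n\ge1}$ with $\sum n|\gamma_n|<\infty$: $\check\omega_n(\gamma):=\sum_{k\ge1}k\gamma_k-\sum_{k>n}(k-n)\gamma_k$ and $\omega_n(\gamma):=n^2-2\check\omega_n(\gamma)$. $\mathbb T=\mathbb R/2\pi\mathbb Z$; $H^s_{r,0}$ is the real Sobolev space of zero-mean real-valued distributions on $\mathbb T$, $L^2_{r,0}=H^0_{r,0}$. BO equation: $\partial_tu=H\partial_x^2u-\partial_x(u^2)$, $H$ the Hilbert transform (multiplier $-i\,\mathrm{sign}(n)$). $h^\sigma_+$: complex sequences with $\sum n^{2\sigma}|z_n|^2<\infty$. Known facts taken as given: for $s>-1/2$ BO is globally well posed in $H^s_{r,0}$ with solution map $\mathcal S(t)$; there is $\Phi:u\mapsto(\zeta_n(u))_{n\ge1}$, a homeomorphism $H^s_{r,0}\to h^{s+1/2}_+$ for each $s>-1/2$, with $\zeta_n(\mathcal S(t)u)=e^{i\omega_nt}\zeta_n(u)$, $\omega_n=\omega_n(\gamma(u))$, where $\gamma_n(u):=|\zeta_n(u)|^2$ (the actions). A finite gap potential is a $u$ with $\zeta_n(u)=0$ for all sufficiently large $n$. *)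

theory Defs
  imports "HOL-Analysis.Analysis"
begin

(* check-omega_n(gamma) = sum_{k>=1} k gamma_k - sum_{k>n} (k-n) gamma_k *)
definition omega_check :: "(nat \<Rightarrow> real) \<Rightarrow> nat \<Rightarrow> real" where
  "omega_check \<gamma> n =
     (\<Sum>j. real (Suc j) * \<gamma> (Suc j)) - (\<Sum>j. real (Suc j) * \<gamma> (n + Suc j))"

definition omega :: "(nat \<Rightarrow> real) \<Rightarrow> nat \<Rightarrow> real" where
  "omega \<gamma> n = real n ^ 2 - 2 * omega_check \<gamma> n"

definition ext_seq :: "nat \<Rightarrow> (nat \<Rightarrow> nat) \<Rightarrow> nat \<Rightarrow> nat \<Rightarrow> nat" where
  "ext_seq N s d p = (if p = 0 then 0 else if p \<le> N then s p else s N + d)"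

definition nn :: "nat \<Rightarrow> (nat \<Rightarrow> nat) \<Rightarrow> nat \<Rightarrow> nat" where
  "nn N n = ext_seq N n 1"
definition kk :: "nat \<Rightarrow> (nat \<Rightarrow> nat) \<Rightarrow> nat \<Rightarrow> nat" where
  "kk N k = ext_seq N k 0"

definition slope_gap :: "nat \<Rightarrow> (nat \<Rightarrow> nat) \<Rightarrow> (nat \<Rightarrow> nat) \<Rightarrow> nat \<Rightarrow> real" where
  "slope_gap N n k p =
     (real (kk N k p) - real (kk N k (p - 1))) / (real (nn N n p) - real (nn N n (p - 1)))
   - (real (kk N k (p + 1)) - real (kk N k p)) / (real (nn N n (p + 1)) - real (nn N n p))"

definition gamma_seq :: "nat \<Rightarrow> nat \<Rightarrow> (nat \<Rightarrow> nat) \<Rightarrow> (nat \<Rightarrow> nat) \<Rightarrow> nat \<Rightarrow> real" where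
  "gamma_seq a N n k m =
     (if \<exists>p\<in>{1..N}. n p = m
      then slope_gap N n k (THE p. p \<in> {1..N} \<and> n p = m) / real a
      else 0)"

definition actions :: "('u \<Rightarrow> nat \<Rightarrow> complex) \<Rightarrow> 'u \<Rightarrow> nat \<Rightarrow> real" where
  "actions \<zeta> u m = (cmod (\<zeta> u m))\<^sup>2"

definition finite_gap :: "('u \<Rightarrow> nat \<Rightarrow> complex) \<Rightarrow> 'u \<Rightarrow> bool" where
  "finite_gap \<zeta> u \<longleftrightarrow> (\<exists>M. \<forall>m\<ge>M. \<zeta> u m = 0)"

end

theory Submission
  imports Defs
begin

(* The sequence gamma is a finite sum of spikes of height c_q at the positions n_q, and for
  such a sequence check-omega_d(gamma) = sum_q min(n_q, d) c_q. Since a c_q is the jump of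
  slope of the polygon through the points (n_p, k_p), Abel summation and telescoping turn
  this sum at d = n_p into k_p / a. So every omega_(n_p) lies in (1/a) Z, only the Birkhoff
  coordinates at the n_p can be nonzero, and each of them returns to itself after time 2 pi a. *)

lemma strict_mono_upto:
  fixes f :: "nat \<Rightarrow> 'a::order"
  assumes "\<forall>p<N. f p < f (Suc p)" "i < j" "j \<le> N"
  shows "f i < f j"
  using assms(2,3)
proof (induction j)
  case (Suc j)
  have step: "f j < f (Suc j)" using assms(1) Suc.prems by simp
  show ?case
  proof (cases "i = j")
    case False
    then have "f i < f j" using Suc by simp
    then show ?thesis using step by (rule less_trans)
  qed (use step in simp)
qed simp

lemma sums_weighted_spike:
  "(\<lambda>j. real (Suc j) * (if d + Suc j = m then c else 0)) sums (real (m - d) * c)"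
proof (cases "d < m")
  case True
  have "(\<lambda>j. real (Suc j) * (if d + Suc j = m then c else 0))
      = (\<lambda>j. if j = m - d - 1 then real (m - d) * c else 0)"
    using True by (intro ext) (auto simp: of_nat_diff)
  then show ?thesis
    using sums_single[of "m - d - 1" "\<lambda>_. real (m - d) * c"] by simp
qed simp

lemma omega_check_spikes:
  fixes c :: "'q \<Rightarrow> real" and m :: "'q \<Rightarrow> nat"
  assumes "finite A"
  shows "omega_check (\<lambda>j. \<Sum>q\<in>A. if j = m q then c q else 0) d
       = (\<Sum>q\<in>A. real (min (m q) d) * c q)"
proof -
  have shifted: "(\<lambda>j. real (Suc j) * (\<Sum>q\<in>A. if e + Suc j = m q then c q else 0))
      sums (\<Sum>q\<in>A. real (m q - e) * c q)" for e
    unfolding sum_distrib_left by (rule sums_sum) (rule sums_weighted_spike)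
  have "omega_check (\<lambda>j. \<Sum>q\<in>A. if j = m q then c q else 0) d
      = (\<Sum>q\<in>A. real (m q) * c q) - (\<Sum>q\<in>A. real (m q - d) * c q)"
    unfolding omega_check_def
    using sums_unique[OF shifted[of 0]] sums_unique[OF shifted[of d]] by simp
  also have "\<dots> = (\<Sum>q\<in>A. real (min (m q) d) * c q)"
    unfolding sum_subtractf[symmetric] left_diff_distrib[symmetric]
    by (intro sum.cong refl) (simp add: of_nat_diff min_def)
  finally show ?thesis .
qed

lemma gamma_seq_eq_spikes:
  assumes "inj_on n {1..N}"
  shows "gamma_seq a N n k = (\<lambda>j. \<Sum>q\<in>{1..N}. if j = n q then slope_gap N n k q / real a else 0)"
proof
  fix j
  show "gamma_seq a N n k j = (\<Sum>q\<in>{1..N}. if j = n q then slope_gap N n k q / real a else 0)"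
  proof (cases "j \<in> n ` {1..N}")
    case True
    then obtain p where p: "p \<in> {1..N}" "j = n p" by blast
    have same: "q \<in> {1..N} \<Longrightarrow> j = n q \<longleftrightarrow> q = p" for q
      using p assms by (metis inj_onD)
    have "(THE p. p \<in> {1..N} \<and> n p = j) = p"
      using p same by (intro the_equality) auto
    moreover have "(\<Sum>q\<in>{1..N}. if j = n q then slope_gap N n k q / real a else 0)
        = (\<Sum>q\<in>{1..N}. if q = p then slope_gap N n k q / real a else 0)"
      using same by (intro sum.cong) simp_all
    ultimately show ?thesis
      using p(1) True by (simp add: gamma_seq_def image_iff eq_commute[of j])
  next
    case False
    then show ?thesis
      by (simp add: gamma_seq_def image_iff eq_commute[of j])
  qed
qed

lemma gamma_seq_eq_0: "j \<notin> n ` {1..N} \<Longrightarrow> gamma_seq a N n k j = 0"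
  by (auto simp: gamma_seq_def)

definition chord_slope :: "nat \<Rightarrow> (nat \<Rightarrow> nat) \<Rightarrow> (nat \<Rightarrow> nat) \<Rightarrow> nat \<Rightarrow> real" where
  "chord_slope N n k q =
     (real (kk N k q) - real (kk N k (q - 1))) / (real (nn N n q) - real (nn N n (q - 1)))"

lemma slope_gap_chord_slope: "slope_gap N n k q = chord_slope N n k q - chord_slope N n k (Suc q)"
  unfolding slope_gap_def chord_slope_def by simp

lemma chord_slope_last: "N \<ge> 1 \<Longrightarrow> chord_slope N n k (Suc N) = 0"
  by (simp add: chord_slope_def kk_def ext_seq_def)

lemma sum_slope_gap_telescope:
  "p \<le> M \<Longrightarrow> (\<Sum>q=Suc p..M. slope_gap N n k q) = chord_slope N n k (Suc p) - chord_slope N n k (Suc M)"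
  using sum_Suc_diff[of "Suc p" M "\<lambda>q. - chord_slope N n k q"]
  by (simp add: slope_gap_chord_slope)

lemma abel_sum_slope_gap:
  assumes "\<forall>p<N. nn N n p < nn N n (Suc p)" and "p \<le> N"
  shows "(\<Sum>q=1..p. real (nn N n q) * slope_gap N n k q) + real (nn N n p) * chord_slope N n k (Suc p)
       = real (kk N k p)"
  using assms(2)
proof (induction p)
  case 0
  then show ?case by (simp add: nn_def kk_def ext_seq_def)
next
  case (Suc p)
  have "nn N n p < nn N n (Suc p)" using assms(1) Suc.prems by simp
  then have "(real (nn N n (Suc p)) - real (nn N n p)) * chord_slope N n k (Suc p)
      = real (kk N k (Suc p)) - real (kk N k p)"
    by (simp add: chord_slope_def)
  then show ?case
    using Suc by (simp add: slope_gap_chord_slope algebra_simps)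
qed

lemma sum_min_mul_slope_gap:
  assumes n_mono: "\<forall>p<N. nn N n p < nn N n (Suc p)" and p: "p \<in> {1..N}"
  shows "(\<Sum>q=1..N. real (min (nn N n q) (nn N n p)) * slope_gap N n k q) = real (kk N k p)"
proof -
  have min_nn: "min (nn N n q) (nn N n p) = nn N n (min q p)" if "q \<le> N" for q
    using strict_mono_upto[OF n_mono, of q p] strict_mono_upto[OF n_mono, of p q] p that
    by (cases q p rule: linorder_cases) auto
  have split: "{1..N} = {1..p} \<union> {Suc p..N}" using p by auto
  have "(\<Sum>q=1..N. real (min (nn N n q) (nn N n p)) * slope_gap N n k q)
      = (\<Sum>q=1..N. real (nn N n (min q p)) * slope_gap N n k q)"
    by (intro sum.cong) (auto simp: min_nn)
  also have "\<dots> = (\<Sum>q=1..p. real (nn N n (min q p)) * slope_gap N n k q)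
      + (\<Sum>q=Suc p..N. real (nn N n (min q p)) * slope_gap N n k q)"
    unfolding split by (simp add: sum.union_disjoint)
  also have "\<dots> = (\<Sum>q=1..p. real (nn N n q) * slope_gap N n k q)
      + (\<Sum>q=Suc p..N. real (nn N n p) * slope_gap N n k q)"
    by (simp add: min_def)
  also have "\<dots> = real (kk N k p)"
    using abel_sum_slope_gap[OF n_mono, of p k] sum_slope_gap_telescope[of p N N n k]
      chord_slope_last[of N n k] p
    by (simp add: sum_distrib_left[symmetric])
  finally show ?thesis .
qed

lemma omega_check_gamma_seq:
  assumes n_mono: "\<forall>p<N. nn N n p < nn N n (Suc p)" and p: "p \<in> {1..N}"
  shows "omega_check (gamma_seq a N n k) (n p) = real (k p) / real a"
proof -
  have nn_eq: "q \<in> {1..N} \<Longrightarrow> nn N n q = n q" for q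
    by (simp add: nn_def ext_seq_def)
  have n_less: "n i < n j" if "i \<in> {1..N}" "j \<in> {1..N}" "i < j" for i j
    using strict_mono_upto[OF n_mono, of i j] that nn_eq by simp
  have "inj_on n {1..N}"
    by (rule inj_onI) (metis n_less less_irrefl linorder_neqE_nat)
  then have "omega_check (gamma_seq a N n k) (n p)
      = (\<Sum>q=1..N. real (min (nn N n q) (nn N n p)) * slope_gap N n k q) / real a"
    using p by (simp add: gamma_seq_eq_spikes omega_check_spikes nn_eq sum_divide_distrib)
  then show ?thesis
    using sum_min_mul_slope_gap[OF n_mono p] p by (simp add: kk_def ext_seq_def)
qed

lemma omega_cong:
  assumes "\<forall>m\<ge>1. g m = h m"
  shows "omega g d = omega h d"
proof -
  have "g (Suc j) = h (Suc j)" "g (d + Suc j) = h (d + Suc j)" for j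
    using assms by simp_all
  then show ?thesis by (simp add: omega_def omega_check_def)
qed

lemma finite_gapI:
  assumes "finite {m. \<zeta> u m \<noteq> 0}"
  shows "finite_gap \<zeta> u"
proof -
  obtain M where "{m. \<zeta> u m \<noteq> 0} \<subseteq> {..<M}"
    using finite_nat_bounded[OF assms] by blast
  then have "\<forall>m\<ge>M. \<zeta> u m = 0" by fastforce
  then show ?thesis unfolding finite_gap_def by blast
qed

lemma omega_gamma_seq_mult:
  assumes "\<forall>p<N. nn N n p < nn N n (Suc p)" and "p \<in> {1..N}" and "a \<noteq> 0"
  shows "omega (gamma_seq a N n k) (n p) * real a = of_int (int a * int (n p) ^ 2 - 2 * int (k p))"
  using omega_check_gamma_seq[OF assms(1,2)] assms(3) by (simp add: omega_def algebra_simps)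

lemma birkhoff_support_gamma_seq:
  assumes "\<forall>m\<ge>1. actions \<zeta> u m = gamma_seq a N n k m" and "m \<ge> 1" and "\<zeta> u m \<noteq> 0"
  shows "m \<in> n ` {1..N}"
proof -
  have "actions \<zeta> u m \<noteq> 0" using assms(3) by (simp add: actions_def)
  then show ?thesis using assms(1,2) gamma_seq_eq_0 by metis
qed

lemma finite_gap_gamma_seq:
  assumes "\<forall>m\<ge>1. actions \<zeta> u m = gamma_seq a N n k m"
  shows "finite_gap \<zeta> u"
proof (rule finite_gapI)
  have "{m. \<zeta> u m \<noteq> 0} \<subseteq> insert 0 (n ` {1..N})"
  proof
    fix m assume "m \<in> {m. \<zeta> u m \<noteq> 0}"
    then show "m \<in> insert 0 (n ` {1..N})"
      using birkhoff_support_gamma_seq[OF assms, of m] by (cases "m = 0") auto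
  qed
  then show "finite {m. \<zeta> u m \<noteq> 0}" by (rule finite_subset) simp
qed

lemma flow_periodic:
  fixes \<zeta> :: "'u \<Rightarrow> nat \<Rightarrow> complex" and S :: "real \<Rightarrow> 'u \<Rightarrow> 'u"
  assumes zeta_inj: "\<And>u v. (\<forall>m\<ge>1. \<zeta> u m = \<zeta> v m) \<Longrightarrow> u = v"
    and zeta_flow: "\<And>u t m. m \<ge> 1 \<Longrightarrow>
        \<zeta> (S t u) m = exp (\<i> * complex_of_real (omega (actions \<zeta> u) m * t)) * \<zeta> u m"
    and resonant: "\<And>m. m \<ge> 1 \<Longrightarrow> \<zeta> u m \<noteq> 0 \<Longrightarrow>
        \<exists>z::int. omega (actions \<zeta> u) m * T = 2 * pi * z"
  shows "S (t + T) u = S t u"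
proof (rule zeta_inj, intro allI impI)
  fix m :: nat assume m: "m \<ge> 1"
  show "\<zeta> (S (t + T) u) m = \<zeta> (S t u) m"
  proof (cases "\<zeta> u m = 0")
    case False
    then obtain z :: int where z: "omega (actions \<zeta> u) m * T = 2 * pi * z"
      using resonant m by blast
    have "omega (actions \<zeta> u) m * (t + T) = omega (actions \<zeta> u) m * t + 2 * pi * z"
      using z by (simp add: distrib_left)
    then have "\<i> * complex_of_real (omega (actions \<zeta> u) m * (t + T))
        = \<i> * complex_of_real (omega (actions \<zeta> u) m * t) + \<i> * (of_int z * (of_real pi * 2))"
      by (simp add: algebra_simps)
    then show ?thesis
      by (simp only: zeta_flow[OF m] exp_plus_2pin)
  qed (simp only: zeta_flow[OF m] mult_zero_right)
qed

theorem proposition3p2: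
  fixes a N :: nat and n k :: "nat \<Rightarrow> nat"
    and \<zeta> :: "'u \<Rightarrow> nat \<Rightarrow> complex" and S :: "real \<Rightarrow> 'u \<Rightarrow> 'u"
  assumes a_pos: "a \<ge> 1"
    and n_mono: "\<forall>p<N. nn N n p < nn N n (Suc p)"
    and k_mono: "\<forall>p<N. kk N k p < kk N k (Suc p)"
    and gap_pos: "\<forall>p\<in>{1..N}. slope_gap N n k p > 0"
    \<comment> \<open>known facts on the Birkhoff map (on L^2_{r,0}, modelled by the abstract type 'u)\<close>
    and zeta_inj: "\<And>u v. (\<forall>m\<ge>1. \<zeta> u m = \<zeta> v m) \<Longrightarrow> u = v"
    and zeta_h12: "\<And>u. summable (\<lambda>j. real (Suc j) * (cmod (\<zeta> u (Suc j)))\<^sup>2)"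
    and zeta_flow: "\<And>u t m. m \<ge> 1 \<Longrightarrow>
        \<zeta> (S t u) m = exp (\<i> * complex_of_real (omega (actions \<zeta> u) m * t)) * \<zeta> u m"
  shows "(\<forall>p\<in>{1..N}.
            omega_check (gamma_seq a N n k) (n p) = real (k p) / real a
          \<and> (\<exists>z::int. omega (gamma_seq a N n k) (n p) = real_of_int z / real a))
       \<and> (\<forall>u0. (\<forall>m\<ge>1. actions \<zeta> u0 m = gamma_seq a N n k m) \<longrightarrow>
            finite_gap \<zeta> u0 \<and> (\<forall>t. S (t + 2 * pi * real a) u0 = S t u0))"
proof -
  let ?\<gamma> = "gamma_seq a N n k"
  have a_nz: "a \<noteq> 0" using a_pos by simp
  have "omega ?\<gamma> (n p) = of_int (int a * int (n p) ^ 2 - 2 * int (k p)) / real a"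
    if "p \<in> {1..N}" for p
    using omega_gamma_seq_mult[OF n_mono that a_nz] a_nz by (simp add: eq_divide_eq)
  moreover have "S (t + 2 * pi * real a) u0 = S t u0"
    if u0: "\<forall>m\<ge>1. actions \<zeta> u0 m = ?\<gamma> m" for u0 t
  proof (rule flow_periodic[OF zeta_inj zeta_flow])
    fix m assume "m \<ge> 1" "\<zeta> u0 m \<noteq> 0"
    then obtain p where p: "p \<in> {1..N}" "m = n p"
      using birkhoff_support_gamma_seq[OF u0] by blast
    have "omega (actions \<zeta> u0) m * (2 * pi * real a) = 2 * pi * (omega ?\<gamma> (n p) * real a)"
      using omega_cong[OF u0] p(2) by simp
    then show "\<exists>z::int. omega (actions \<zeta> u0) m * (2 * pi * real a) = 2 * pi * z"
      using omega_gamma_seq_mult[OF n_mono p(1) a_nz] by metis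
  qed
  ultimately show ?thesis
    using omega_check_gamma_seq[OF n_mono] finite_gap_gamma_seq[of \<zeta> _ a N n k] by fast
qed

end
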